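(* Let $1\le j\le s$ and $B>j$ be natural numbers and let $d=4s\sum_{1\le i\le j+1}B^i$. For all sufficiently large natural numbers $q$ there exists $\bar x\in\mathbb{N}^s$ such that for all $\bar a\in\{0,\dots,B-1\}^s$ and all $c\in\{0,\dots,B-1\}$: (a) if $\bar a\ne\bar 0$ then $\frac{q}{d}<\bar a^\top\bar x-c$; (b) $\bar a^\top\bar x-c<qd$; and (c) $\bar a^\top\bar x-c=q$ if and only if $\bar a=(1,\dots,1,0,\dots,0)$ (with exactly $j$ leading entries $1$) and $c=0$.
   Context: $\bar a^\top\bar x=\sum_{i=1}^s a_ix_i$. *)

theory Defs
  imports Complex_Main
begin

end

theory Submission
  imports Defs
begin

text \<open>Let \<open>T = 1 + B + ... + B^(j-1)\<close> and write \<open>q = m * T + r\<close> with \<open>r < T\<close>.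
  Put \<open>x i = m * B^i\<close> for \<open>i < j\<close>, plus \<open>r\<close> on \<open>x 0\<close>, and \<open>x i = q + B\<close> for \<open>i \<ge> j\<close>.
  Then \<open>a \<bullet> x = m * N + a 0 * r + (q + B) * R\<close>, where \<open>N\<close> has base-\<open>B\<close> digits
  \<open>a 0, ..., a (j-1)\<close> and \<open>R = a j + ... + a (s-1)\<close>. For large \<open>m\<close> this equals \<open>q + c\<close>
  only if \<open>R = 0\<close> and \<open>N = T\<close>, i.e. the first \<open>j\<close> digits are all \<open>1\<close>, which forces
  \<open>c = 0\<close>. A nonzero \<open>a\<close> gives \<open>a \<bullet> x \<ge> m\<close>, roughly \<open>q / T\<close>, while always
  \<open>a \<bullet> x \<le> s * B * (q + B)\<close>; the factor \<open>d\<close> absorbs both bounds.\<close>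

lemma digit_sum_less_power:
  fixes a :: "nat \<Rightarrow> nat"
  assumes "\<forall>i<n. a i < B"
  shows "(\<Sum>i<n. a i * B ^ i) < B ^ n"
  using assms
proof (induction n)
  case 0
  then show ?case by simp
next
  case (Suc n)
  have "(\<Sum>i<Suc n. a i * B ^ i) < B ^ n + a n * B ^ n"
    using Suc by simp
  also have "\<dots> = (a n + 1) * B ^ n" by simp
  also have "\<dots> \<le> B * B ^ n"
    using Suc.prems by (intro mult_right_mono) auto
  finally show ?case by simp
qed

lemma digit_sum_inj:
  fixes a b :: "nat \<Rightarrow> nat"
  assumes "\<forall>i<n. a i < B" and "\<forall>i<n. b i < B"
    and "(\<Sum>i<n. a i * B ^ i) = (\<Sum>i<n. b i * B ^ i)"
  shows "\<forall>i<n. a i = b i"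
  using assms
proof (induction n)
  case 0
  then show ?case by simp
next
  case (Suc n)
  define A where "A = (\<Sum>i<n. a i * B ^ i)"
  define A' where "A' = (\<Sum>i<n. b i * B ^ i)"
  have A: "A < B ^ n" and A': "A' < B ^ n"
    using Suc.prems by (auto simp: A_def A'_def intro!: digit_sum_less_power)
  have eq: "A + a n * B ^ n = A' + b n * B ^ n"
    using Suc.prems(3) by (simp add: A_def A'_def)
  have "B ^ n \<noteq> 0" using A by (intro notI) simp
  then have last: "a n = b n"
    using arg_cong[OF eq, of "\<lambda>k. k div B ^ n"] A A' by simp
  have "A = A'"
    using arg_cong[OF eq, of "\<lambda>k. k mod B ^ n"] A A' by simp
  then have "\<forall>i<n. a i = b i"
    using Suc.prems by (intro Suc.IH) (auto simp: A_def A'_def)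
  with last show ?case by (auto simp: less_Suc_eq)
qed

definition repunit :: "nat \<Rightarrow> nat \<Rightarrow> nat" where
  "repunit B j = (\<Sum>i<j. B ^ i)"

lemma power_le_repunit: "i < j \<Longrightarrow> B ^ i \<le> repunit B j"
  unfolding repunit_def by (rule member_le_sum) auto

lemma repunit_pos: "1 \<le> j \<Longrightarrow> 0 < repunit B j"
  using power_le_repunit[of 0 j B] by simp

lemma repunit_less_power: "1 < B \<Longrightarrow> repunit B j < B ^ j"
  using digit_sum_less_power[of j "\<lambda>_. 1" B] by (simp add: repunit_def)

definition witness :: "nat \<Rightarrow> nat \<Rightarrow> nat \<Rightarrow> nat \<Rightarrow> nat" where
  "witness B j q i =
     (if i = 0 then q div repunit B j + q mod repunit B j
      else if i < j then q div repunit B j * B ^ i else q + B)"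

lemma witness_ge: "1 \<le> B \<Longrightarrow> q div repunit B j \<le> witness B j q i"
  unfolding witness_def by (auto intro: div_le_dividend order.trans[OF _ le_add1])

lemma witness_le: "witness B j q i \<le> q + B"
proof -
  define m r where "m = q div repunit B j" and "r = q mod repunit B j"
  have q: "m * repunit B j + r = q"
    unfolding m_def r_def by (rule div_mult_mod_eq)
  have m: "m \<le> m * repunit B j"
    by (cases "repunit B j = 0") (simp_all add: m_def)
  have "m * B ^ i \<le> q" if "i < j"
    using q mult_le_mono2[OF power_le_repunit[of i j B, OF that], of m] by linarith
  moreover have "m + r \<le> q" using q m by linarith
  ultimately show ?thesis
    unfolding witness_def m_def[symmetric] r_def[symmetric] by auto
qed

lemma witness_weighted_sum:
  assumes "1 \<le> j" and "j \<le> s"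
  shows "(\<Sum>i<s. a i * witness B j q i) =
           q div repunit B j * (\<Sum>i<j. a i * B ^ i) + a 0 * (q mod repunit B j)
           + (q + B) * (\<Sum>i=j..<s. a i)"
proof -
  have "(\<Sum>i<s. a i * witness B j q i) =
          (\<Sum>i<j. a i * witness B j q i) + (\<Sum>i=j..<s. a i * witness B j q i)"
    using sum.atLeastLessThan_concat[of 0 j s "\<lambda>i. a i * witness B j q i"] assms by (simp add: atLeast0LessThan)
  moreover have "(\<Sum>i<j. a i * witness B j q i) =
      (\<Sum>i<j. q div repunit B j * (a i * B ^ i) + (if i = 0 then a 0 * (q mod repunit B j) else 0))"
    by (rule sum.cong) (auto simp: witness_def algebra_simps)
  moreover have "(\<Sum>i=j..<s. a i * witness B j q i) = (\<Sum>i=j..<s. (q + B) * a i)"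
    using assms by (intro sum.cong) (auto simp: witness_def)
  ultimately show ?thesis
    using assms by (simp add: sum.distrib sum_distrib_left)
qed

text \<open>Both \<open>a0 * r\<close> and \<open>r + c\<close> are below \<open>m\<close>, so once \<open>R = 0\<close>
  the quotients by \<open>m\<close> of the two sides force \<open>N = T\<close>.\<close>

lemma representation_eq_iff:
  fixes m T r N a0 c R B :: nat
  assumes "r < T" and "a0 < B" and "c < B" and "B * T + B \<le> m"
  shows "m * N + a0 * r + (m * T + r + B) * R = m * T + r + c \<longleftrightarrow>
           R = 0 \<and> N = T \<and> a0 * r = r + c"
proof
  assume eq: "m * N + a0 * r + (m * T + r + B) * R = m * T + r + c"
  show "R = 0 \<and> N = T \<and> a0 * r = r + c"
  proof (intro conjI)
    show R: "R = 0"
    proof (rule ccontr)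
      assume "R \<noteq> 0"
      then have "m * T + r + B \<le> (m * T + r + B) * R" by simp
      then show False using eq \<open>c < B\<close> by linarith
    qed
    have eq': "m * N + a0 * r = m * T + r + c" using eq R by simp
    have "a0 * r < m"
      using mult_le_mono[of a0 B r T] assms by (simp add: le_add1 order.strict_trans2)
    then have lower: "m * T < m * (N + 1)" using eq' by (simp add: algebra_simps)
    have "T \<le> B * T" using \<open>c < B\<close> by simp
    then have "r + c < m" using assms by linarith
    then have upper: "m * N < m * (T + 1)" using eq' by (simp add: algebra_simps)
    have "T < N + 1" and "N < T + 1"
      using lower upper by (simp_all only: mult_less_cancel1)
    then show N: "N = T" by simp
    show "a0 * r = r + c" using eq' N by simp
  qed
qed auto

lemma witness_sum_eq_iff:
  assumes "1 \<le> j" and "j \<le> s" and "2 \<le> B" and a: "\<forall>i<s. a i < B" and "c < B"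
    and "B * repunit B j + B \<le> q div repunit B j"
  shows "(\<Sum>i<s. a i * witness B j q i) = q + c \<longleftrightarrow>
           (\<forall>i<s. a i = (if i < j then 1 else 0)) \<and> c = 0"
proof -
  define T m r where "T = repunit B j" and "m = q div T" and "r = q mod T"
  define N R where "N = (\<Sum>i<j. a i * B ^ i)" and "R = (\<Sum>i=j..<s. a i)"
  have q: "q = m * T + r"
    unfolding m_def r_def by (rule div_mult_mod_eq[symmetric])
  have "r < T" using repunit_pos[OF assms(1)] by (simp add: r_def T_def)
  have "(\<Sum>i<s. a i * witness B j q i) = m * N + a 0 * r + (q + B) * R"
    unfolding m_def r_def N_def R_def T_def by (rule witness_weighted_sum[OF assms(1,2)])
  then have "(\<Sum>i<s. a i * witness B j q i) = q + c \<longleftrightarrow>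
          m * N + a 0 * r + (m * T + r + B) * R = m * T + r + c"
    unfolding q[symmetric] by simp
  also have "\<dots> \<longleftrightarrow> R = 0 \<and> N = T \<and> a 0 * r = r + c"
    using assms \<open>r < T\<close> by (intro representation_eq_iff) (auto simp: m_def T_def)
  finally have sum_iff: "(\<Sum>i<s. a i * witness B j q i) = q + c \<longleftrightarrow>
    R = 0 \<and> N = T \<and> a 0 * r = r + c" .
  have N_iff: "N = T \<longleftrightarrow> (\<forall>i<j. a i = 1)"
  proof
    assume "N = T"
    have "\<forall>i<j. a i < B" using a \<open>j \<le> s\<close> by simp
    moreover have "\<forall>i<j. 1 < B" using \<open>2 \<le> B\<close> by simp
    moreover have "(\<Sum>i<j. a i * B ^ i) = (\<Sum>i<j. 1 * B ^ i)"
      using \<open>N = T\<close> by (simp add: N_def T_def repunit_def)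
    ultimately show "\<forall>i<j. a i = 1" by (rule digit_sum_inj)
  qed (simp add: N_def T_def repunit_def)
  have R_iff: "R = 0 \<longleftrightarrow> (\<forall>i\<in>{j..<s}. a i = 0)" by (simp add: R_def)
  have "a 0 = 1 \<Longrightarrow> a 0 * r = r + c \<longleftrightarrow> c = 0" by simp
  then show ?thesis
    unfolding sum_iff N_iff R_iff using assms(1,2) by (auto simp: not_less)
qed

lemma witness_sum_ge_quotient:
  assumes "i < s" and "a i \<noteq> 0" and "1 \<le> B"
  shows "q div repunit B j \<le> (\<Sum>i<s. a i * witness B j q i)"
proof -
  have "witness B j q i \<le> a i * witness B j q i" using assms(2) by simp
  then have "q div repunit B j \<le> a i * witness B j q i"
    using witness_ge[OF assms(3)] by (rule order.trans[rotated])
  also have "\<dots> \<le> (\<Sum>i<s. a i * witness B j q i)"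
    using assms(1) by (intro member_le_sum) auto
  finally show ?thesis .
qed

lemma witness_sum_less:
  assumes "\<forall>i<s. a i < B" and "1 \<le> q" and "0 < s"
  shows "(\<Sum>i<s. a i * witness B j q i) < q * (4 * s * (B + B ^ 2))"
proof -
  have "a 0 < B" using assms(1,3) by simp
  then have "0 < B" by simp
  have "a i * witness B j q i \<le> B * (q + B)" if "i < s" for i
    using assms(1) that witness_le[of B j q i] by (simp add: less_imp_le mult_le_mono)
  then have "(\<Sum>i<s. a i * witness B j q i) \<le> (\<Sum>i<s. B * (q + B))"
    by (intro sum_mono) simp
  also have "\<dots> = s * B * q + s * B * B" by (simp add: algebra_simps)
  also have "\<dots> \<le> s * B * q + s * B * B * q" using assms(2) by simp
  also have "\<dots> = q * (s * (B + B ^ 2))" by (simp add: algebra_simps power2_eq_square)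
  also have "\<dots> < q * (4 * s * (B + B ^ 2))"
    using assms(2,3) \<open>0 < B\<close> by simp
  finally show ?thesis .
qed

lemma ratio_less_of_quotient_le:
  fixes q T S c B d :: nat
  assumes "q div T \<le> S" and "c < B" and "2 * B + 2 \<le> q div T" and "2 * T \<le> d" and "0 < T"
  shows "real q / real d < real S - real c"
proof -
  define m where "m = q div T"
  have "q mod T < T" using assms(5) by simp
  then have "q < T * m + T"
    unfolding m_def using mult_div_mod_eq[of T q] by linarith
  also have "\<dots> = T * (m + 1)" by simp
  also have "\<dots> \<le> T * (2 * (m - B))"
    using assms(3) by (intro mult_le_mono2) (simp add: m_def)
  also have "\<dots> \<le> d * (S - c)"
    using assms(1,2,4) by (simp add: m_def mult.assoc[symmetric] mult_le_mono)
  finally have "q < d * (S - c)" .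
  moreover have "c \<le> S" using assms(1-3) by linarith
  ultimately have "real q < real d * (real S - real c)"
    by (metis of_nat_diff of_nat_less_iff of_nat_mult)
  moreover have "0 < d" using assms(4,5) by simp
  ultimately show ?thesis
    by (simp add: pos_divide_less_eq mult.commute)
qed

lemma repunit_le_power_sum:
  assumes "1 \<le> j" and "1 < B"
  shows "repunit B j \<le> (\<Sum>i = 1..j+1. B ^ i)"
proof -
  have "repunit B j < B ^ j" using repunit_less_power[OF assms(2)] .
  also have "\<dots> \<le> (\<Sum>i = 1..j+1. B ^ i)" using assms(1) by (intro member_le_sum) auto
  finally show ?thesis by simp
qed

lemma power_sum_ge: "1 \<le> j \<Longrightarrow> (B::nat) + B ^ 2 \<le> (\<Sum>i = 1..j+1. B ^ i)"
  using sum_mono2[of "{1..j+1}" "{1, 2}" "\<lambda>i. B ^ i"] by simp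

lemma witness_spec:
  fixes X :: nat
  assumes "1 \<le> j" and "j \<le> s" and "j < B"
    and "repunit B j \<le> X" and "B + B ^ 2 \<le> X"
    and "repunit B j * (B * repunit B j + 2 * B + 2) \<le> q"
    and a: "\<forall>i<s. a i < B" and c: "c < B"
  defines "d \<equiv> 4 * s * X" and "S \<equiv> \<Sum>i<s. a i * witness B j q i"
  shows "((\<exists>i<s. a i \<noteq> 0) \<longrightarrow> real q / real d < real S - real c) \<and>
         real S - real c < real q * real d \<and>
         (real S - real c = real q \<longleftrightarrow> (\<forall>i<s. a i = (if i < j then 1 else 0)) \<and> c = 0)"
proof (intro conjI impI)
  define T where "T = repunit B j"
  have "0 < T" using repunit_pos[OF assms(1)] by (simp add: T_def)
  have m: "B * T + 2 * B + 2 \<le> q div T" and "1 \<le> q"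
    using assms(6) \<open>0 < T\<close> by (simp_all add: T_def less_eq_div_iff_mult_less_eq order.trans[rotated])
  have "X \<le> s * X" using assms(1,2) by simp
  then have T_le_d: "2 * T \<le> d" using assms(4) unfolding d_def T_def by linarith
  show "real q / real d < real S - real c" if nonzero: "\<exists>i<s. a i \<noteq> 0"
  proof -
    obtain i where "i < s" and "a i \<noteq> 0" using nonzero by blast
    then have "q div T \<le> S"
      using witness_sum_ge_quotient c by (simp add: S_def T_def)
    moreover have "2 * B + 2 \<le> q div T" using m by linarith
    ultimately show ?thesis
      using ratio_less_of_quotient_le c T_le_d \<open>0 < T\<close> by blast
  qed
  have "S < q * (4 * s * (B + B ^ 2))"
    unfolding S_def using witness_sum_less[OF a \<open>1 \<le> q\<close>] assms(1,2) by simp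
  also have "\<dots> \<le> q * d" using assms(5) by (simp add: d_def)
  finally have "real S < real q * real d"
    by (simp only: of_nat_less_iff flip: of_nat_mult)
  then show "real S - real c < real q * real d" by linarith
  have "real S - real c = real q \<longleftrightarrow> S = q + c"
    by (simp only: diff_eq_eq of_nat_eq_iff flip: of_nat_add)
  moreover have "B * T + B \<le> q div T" using m by linarith
  ultimately show "real S - real c = real q \<longleftrightarrow> (\<forall>i<s. a i = (if i < j then 1 else 0)) \<and> c = 0"
    using witness_sum_eq_iff[OF assms(1,2) _ a c] assms(1,3) by (simp add: S_def T_def)
qed

theorem lemma6p8:
  fixes s j B :: nat
  assumes "1 \<le> j" and "j \<le> s" and "j < B"
  defines "d \<equiv> 4 * s * (\<Sum>i = 1..j+1. B ^ i)"
  shows "\<exists>Q::nat. \<forall>q\<ge>Q. \<exists>x :: nat \<Rightarrow> nat.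
           \<forall>a :: nat \<Rightarrow> nat. (\<forall>i<s. a i < B) \<longrightarrow> (\<forall>c<B.
             ((\<exists>i<s. a i \<noteq> 0) \<longrightarrow>
                real q / real d < real (\<Sum>i<s. a i * x i) - real c) \<and>
             real (\<Sum>i<s. a i * x i) - real c < real q * real d \<and>
             (real (\<Sum>i<s. a i * x i) - real c = real q \<longleftrightarrow>
                ((\<forall>i<s. a i = (if i < j then 1 else 0)) \<and> c = 0)))"
proof -
  have "repunit B j \<le> (\<Sum>i = 1..j+1. B ^ i)"
    using repunit_le_power_sum assms(1,3) by simp
  moreover have "B + B ^ 2 \<le> (\<Sum>i = 1..j+1. B ^ i)"
    using power_sum_ge assms(1) by simp
  ultimately show ?thesis
    unfolding d_def using witness_spec[OF assms(1-3)] by blast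
qed

end
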